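(* For each $k > 0$ there is a comonad in Kleisli form $(\mathbb{H}_{k}, \varepsilon, (\cdot)^* )$ on $\mathsf{HGraph}$, given by restricting focussed plays to hyperedges of size at most $k$.
   Context: $\mathsf{HGraph}$ is the category of hypergraphs $(V,E)$ ($E$ a family of finite subsets of $V$) and maps sending hyperedges to hyperedges. The hypergraph comonad $\mathbb{H}$: vertices of $\mathbb{H}(V,E)$ are equivalence classes $[p,a]$ of focussed plays $\langle p,a\rangle$ ($p=[U_1,\ldots,U_n]$ a non-empty list of hyperedges, $a\in U_n$), where $\langle p,a\rangle\sim\langle q,a'\rangle$ iff $a=a'$, $p\sqcap q$ non-empty, and $a$ lies in the last hyperedge of every play on the prefix-order paths from $p\sqcap q$ to $p$ and $q$; hyperedges are $\{[p,a]\mid a\in U\}$ with $U\in E$ the last element of $p$. Counit $\varepsilon([p,a])=a$; coextension $h^*([[U_1,\ldots,U_n],a])=[[V_1,\ldots,V_n],h([[U_1,\ldots,U_n],a])]$ with $V_j=\{h([[U_1,\ldots,U_j],b])\mid b\in U_j\}$. *)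

theory Defs
  imports Main "HOL-Library.Sublist"
begin

type_synonym 'v hgraph = "'v set \<times> 'v set set"

definition hypergraph :: "'v hgraph \<Rightarrow> bool" where
  "hypergraph G \<longleftrightarrow> (\<forall>U\<in>snd G. finite U \<and> U \<subseteq> fst G)"

text \<open>Morphisms of HGraph: maps on vertices sending hyperedges to hyperedges
  (functions are only considered on the vertex set).\<close>
definition hmor :: "'v hgraph \<Rightarrow> 'w hgraph \<Rightarrow> ('v \<Rightarrow> 'w) \<Rightarrow> bool" where
  "hmor G G' f \<longleftrightarrow> f ` fst G \<subseteq> fst G' \<and> (\<forall>U\<in>snd G. f ` U \<in> snd G')"

definition plays :: "nat \<Rightarrow> 'v set set \<Rightarrow> 'v set list set" where
  "plays k E = {p. p \<noteq> [] \<and> (\<forall>U\<in>set p. U \<in> E \<and> card U \<le> k)}"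

definition fplay :: "nat \<Rightarrow> 'v set set \<Rightarrow> ('v set list \<times> 'v) \<Rightarrow> bool" where
  "fplay k E pa \<longleftrightarrow> fst pa \<in> plays k E \<and> snd pa \<in> last (fst pa)"

text \<open>The equivalence on focussed plays; longest_common_prefix is the meet in the prefix order.\<close>
definition play_rel :: "('v set list \<times> 'v) \<Rightarrow> ('v set list \<times> 'v) \<Rightarrow> bool" where
  "play_rel pa qb \<longleftrightarrow>
     (let p = fst pa; a = snd pa; q = fst qb; b = snd qb; m = longest_common_prefix p q in
       a = b \<and> m \<noteq> [] \<and>
       (\<forall>r. prefix m r \<and> prefix r p \<longrightarrow> a \<in> last r) \<and>
       (\<forall>r. prefix m r \<and> prefix r q \<longrightarrow> a \<in> last r))"

definition cls :: "nat \<Rightarrow> 'v set set \<Rightarrow> ('v set list \<times> 'v) \<Rightarrow> ('v set list \<times> 'v) set" where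
  "cls k E pa = {qb. fplay k E qb \<and> play_rel pa qb}"

definition Hk :: "nat \<Rightarrow> 'v hgraph \<Rightarrow> ('v set list \<times> 'v) set hgraph" where
  "Hk k G =
    ({cls k (snd G) pa | pa. fplay k (snd G) pa},
     {{cls k (snd G) (p, a) | a. a \<in> last p} | p. p \<in> plays k (snd G)})"

definition eps :: "('v set list \<times> 'v) set \<Rightarrow> 'v" where
  "eps x = snd (SOME pa. pa \<in> x)"

definition imgplay :: "nat \<Rightarrow> 'v set set \<Rightarrow> (('v set list \<times> 'v) set \<Rightarrow> 'w) \<Rightarrow> 'v set list \<Rightarrow> 'w set list" where
  "imgplay k E h p =
     map (\<lambda>j. (\<lambda>b. h (cls k E (take (Suc j) p, b))) ` (p ! j)) [0..<length p]"

definition kext :: "nat \<Rightarrow> 'v hgraph \<Rightarrow> 'w hgraph \<Rightarrow> (('v set list \<times> 'v) set \<Rightarrow> 'w)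
                    \<Rightarrow> ('v set list \<times> 'v) set \<Rightarrow> ('w set list \<times> 'w) set" where
  "kext k G G' h x =
     (let pa = (SOME pa. pa \<in> x)
      in cls k (snd G') (imgplay k (snd G) h (fst pa), h (cls k (snd G) pa)))"

end

theory Submission
  imports Defs
begin

text \<open>The relation on focussed plays is transitive because longest common prefixes are
  ultrametric: of lcp p q and lcp q s one is a prefix of lcp p s, so the path from lcp p s to p is
  covered by paths along which the focus is already known to stay.  The coextension is well
  defined because imaging commutes with taking prefixes: a prefix of the image play that extends
  the image of lcp p q is the image of a prefix t of p with (t, a) related to (p, a), so the image
  of the vertex [p, a] lies in its last hyperedge.  The comonad laws then hold hyperedge by
  hyperedge on representatives.\<close>

lemma longest_common_prefix_commute:
  "longest_common_prefix p q = longest_common_prefix q p"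
  by (induction p q rule: longest_common_prefix.induct) auto

lemma prefix_longest_common_prefix_iff:
  "prefix r (longest_common_prefix p q) \<longleftrightarrow> prefix r p \<and> prefix r q"
  using longest_common_prefix_max_prefix longest_common_prefix_prefix1
    longest_common_prefix_prefix2 prefix_order.trans by blast

lemma longest_common_prefix_of_prefix:
  "prefix r p \<Longrightarrow> longest_common_prefix r p = r"
  by (rule prefix_order.antisym[OF longest_common_prefix_prefix1
        longest_common_prefix_max_prefix[OF prefix_order.refl]])

lemma longest_common_prefix_ultrametric:
  "prefix (longest_common_prefix p q) (longest_common_prefix p s)
   \<or> prefix (longest_common_prefix q s) (longest_common_prefix p s)"
proof -
  let ?m1 = "longest_common_prefix p q" and ?m2 = "longest_common_prefix q s"
  have "prefix ?m1 q" "prefix ?m2 q"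
    by (simp_all add: longest_common_prefix_prefix1 longest_common_prefix_prefix2)
  then have "prefix ?m1 ?m2 \<or> prefix ?m2 ?m1"
    by (rule prefix_same_cases)
  then show ?thesis
    unfolding prefix_longest_common_prefix_iff
    using longest_common_prefix_prefix1 longest_common_prefix_prefix2 prefix_order.trans by blast
qed

definition focus_along :: "'v \<Rightarrow> 'v set list \<Rightarrow> 'v set list \<Rightarrow> bool" where
  "focus_along a m p \<longleftrightarrow> (\<forall>r. prefix m r \<and> prefix r p \<longrightarrow> a \<in> last r)"

lemma play_rel_iff:
  "play_rel (p, a) (q, b) \<longleftrightarrow> a = b \<and> longest_common_prefix p q \<noteq> []
     \<and> focus_along a (longest_common_prefix p q) p \<and> focus_along a (longest_common_prefix p q) q"
  unfolding play_rel_def focus_along_def Let_def by auto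

lemma play_rel_refl: "p \<noteq> [] \<Longrightarrow> a \<in> last p \<Longrightarrow> play_rel (p, a) (p, a)"
  by (auto simp: play_rel_iff focus_along_def longest_common_prefix_of_prefix
      dest: prefix_order.antisym)

lemma play_rel_sym: "play_rel x y \<Longrightarrow> play_rel y x"
  by (cases x; cases y) (auto simp: play_rel_iff longest_common_prefix_commute)

lemma focus_along_longest_common_prefix_trans:
  assumes pq: "longest_common_prefix p q \<noteq> []" "focus_along a (longest_common_prefix p q) p"
    and qs: "longest_common_prefix q s \<noteq> []" "focus_along a (longest_common_prefix q s) q"
  shows "longest_common_prefix p s \<noteq> [] \<and> focus_along a (longest_common_prefix p s) p"
proof
  let ?m1 = "longest_common_prefix p q" and ?m2 = "longest_common_prefix q s"
    and ?m3 = "longest_common_prefix p s"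
  have m1: "prefix ?m1 p" "prefix ?m1 q"
    using prefix_longest_common_prefix_iff by blast+
  have m3: "prefix ?m1 ?m3 \<or> prefix ?m2 ?m3"
    by (rule longest_common_prefix_ultrametric)
  then show "?m3 \<noteq> []"
    using pq(1) qs(1) by auto
  show "focus_along a ?m3 p"
    unfolding focus_along_def
  proof (intro allI impI)
    fix r assume r: "prefix ?m3 r \<and> prefix r p"
    show "a \<in> last r"
    proof (cases "prefix ?m1 r")
      case True
      then show ?thesis using pq(2) r by (simp add: focus_along_def)
    next
      case False
      then have "prefix r q"
        using r m1 prefix_same_cases prefix_order.trans by blast
      moreover have "prefix ?m2 r"
        using m3 r False prefix_order.trans by blast
      ultimately show ?thesis using qs(2) by (simp add: focus_along_def)
    qed
  qed
qed

lemma play_rel_trans: "play_rel x y \<Longrightarrow> play_rel y z \<Longrightarrow> play_rel x z"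
proof (cases x, cases y, cases z)
  fix p a q b s c
  assume xyz: "x = (p, a)" "y = (q, b)" "z = (s, c)" and "play_rel x y" "play_rel y z"
  then have "a = b" "b = c" and pq: "play_rel (p, a) (q, a)" and qs: "play_rel (q, a) (s, a)"
    by (auto simp: play_rel_iff)
  have "longest_common_prefix p s \<noteq> [] \<and> focus_along a (longest_common_prefix p s) p"
    using pq qs by (intro focus_along_longest_common_prefix_trans) (auto simp: play_rel_iff)
  moreover have "longest_common_prefix s p \<noteq> [] \<and> focus_along a (longest_common_prefix s p) s"
    using play_rel_sym[OF qs] play_rel_sym[OF pq]
    by (intro focus_along_longest_common_prefix_trans) (auto simp: play_rel_iff)
  ultimately show "play_rel x z"
    using xyz \<open>a = b\<close> \<open>b = c\<close>
    by (simp add: play_rel_iff longest_common_prefix_commute[of s p])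
qed

lemma play_rel_prefix:
  assumes "prefix t p" "t \<noteq> []" "focus_along a t p"
  shows "play_rel (t, a) (p, a)"
  using assms longest_common_prefix_of_prefix[OF assms(1)]
  by (auto simp: play_rel_iff focus_along_def dest: prefix_order.trans)

lemma cls_self: "fplay k E pa \<Longrightarrow> pa \<in> cls k E pa"
  by (cases pa) (simp add: cls_def fplay_def plays_def play_rel_refl)

lemma fplay_if_mem_cls: "qb \<in> cls k E pa \<Longrightarrow> fplay k E qb"
  by (simp add: cls_def)

lemma snd_if_mem_cls: "qb \<in> cls k E pa \<Longrightarrow> snd qb = snd pa"
  by (cases pa; cases qb) (auto simp: cls_def play_rel_iff)

lemma cls_eq:
  assumes "play_rel pa qb"
  shows "cls k E pa = cls k E qb"
  unfolding cls_def using play_rel_trans[OF assms] play_rel_trans[OF play_rel_sym[OF assms]]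
  by blast

lemma cls_eq_if_mem: "qb \<in> cls k E pa \<Longrightarrow> cls k E qb = cls k E pa"
  by (rule cls_eq[OF play_rel_sym]) (simp add: cls_def)

lemma eps_cls:
  assumes "fplay k E pa"
  shows "eps (cls k E pa) = snd pa"
proof -
  have "(SOME qb. qb \<in> cls k E pa) \<in> cls k E pa"
    using cls_self[OF assms] by (rule someI)
  then show ?thesis
    by (simp add: eps_def snd_if_mem_cls)
qed

lemma mem_vertices_Hk:
  "x \<in> fst (Hk k G) \<longleftrightarrow> (\<exists>pa. fplay k (snd G) pa \<and> x = cls k (snd G) pa)"
  by (auto simp: Hk_def)

lemma mem_edges_Hk:
  "U \<in> snd (Hk k G) \<longleftrightarrow> (\<exists>p \<in> plays k (snd G). U = (\<lambda>a. cls k (snd G) (p, a)) ` last p)"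
  by (auto simp: Hk_def image_def)

lemma vertex_Hk_eq_cls:
  assumes "x \<in> fst (Hk k G)" "pa \<in> x"
  shows "x = cls k (snd G) pa" "fplay k (snd G) pa"
proof -
  obtain pb where "x = cls k (snd G) pb"
    using assms(1) by (auto simp: mem_vertices_Hk)
  then show "x = cls k (snd G) pa" "fplay k (snd G) pa"
    using assms(2) cls_eq_if_mem fplay_if_mem_cls by blast+
qed

lemma last_mem_edges: "p \<in> plays k E \<Longrightarrow> last p \<in> E"
  by (simp add: plays_def)

lemma take_Suc_in_plays: "p \<in> plays k E \<Longrightarrow> j < length p \<Longrightarrow> take (Suc j) p \<in> plays k E"
  by (auto simp: plays_def dest: in_set_takeD)

lemma last_take_Suc: "j < length p \<Longrightarrow> last (take (Suc j) p) = p ! j"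
  by (simp add: take_Suc_conv_app_nth)

lemma fplay_take_Suc:
  "p \<in> plays k E \<Longrightarrow> j < length p \<Longrightarrow> b \<in> p ! j \<Longrightarrow> fplay k E (take (Suc j) p, b)"
  by (simp add: fplay_def take_Suc_in_plays last_take_Suc)

lemma length_imgplay [simp]: "length (imgplay k E h p) = length p"
  by (simp add: imgplay_def)

lemma imgplay_eq_Nil_iff [simp]: "imgplay k E h p = [] \<longleftrightarrow> p = []"
  by (simp add: imgplay_def)

lemma nth_imgplay:
  "j < length p \<Longrightarrow> imgplay k E h p ! j = (\<lambda>b. h (cls k E (take (Suc j) p, b))) ` (p ! j)"
  by (simp add: imgplay_def)

lemma take_imgplay: "take n (imgplay k E h p) = imgplay k E h (take n p)"
  by (rule nth_equalityI) (simp_all add: nth_imgplay)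

lemma prefix_imgplay: "prefix r p \<Longrightarrow> prefix (imgplay k E h r) (imgplay k E h p)"
  by (metis prefix_def take_imgplay append_eq_conv_conj length_imgplay take_is_prefix)

lemma last_imgplay:
  assumes "p \<noteq> []"
  shows "last (imgplay k E h p) = (\<lambda>b. h (cls k E (p, b))) ` last p"
proof -
  have "last (imgplay k E h p) = imgplay k E h p ! (length p - 1)"
    using assms by (simp add: last_conv_nth)
  also have "\<dots> = (\<lambda>b. h (cls k E (p, b))) ` last p"
    using assms by (simp add: nth_imgplay last_conv_nth)
  finally show ?thesis .
qed

lemma imgplay_in_plays:
  assumes hA: "hypergraph A" and h: "hmor (Hk k A) B h" and p: "p \<in> plays k (snd A)"
  shows "imgplay k (snd A) h p \<in> plays k (snd B)"
  unfolding plays_def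
proof (intro CollectI conjI ballI)
  show "imgplay k (snd A) h p \<noteq> []"
    using p by (simp add: plays_def)
  fix V assume "V \<in> set (imgplay k (snd A) h p)"
  then obtain j where j: "j < length p" and V: "V = imgplay k (snd A) h p ! j"
    by (auto simp: in_set_conv_nth)
  let ?t = "take (Suc j) p"
  have "V = h ` (\<lambda>b. cls k (snd A) (?t, b)) ` last ?t"
    using j V by (simp add: nth_imgplay last_take_Suc image_image)
  moreover have "(\<lambda>b. cls k (snd A) (?t, b)) ` last ?t \<in> snd (Hk k A)"
    using take_Suc_in_plays[OF p j] by (auto simp: mem_edges_Hk)
  ultimately show "V \<in> snd B"
    using h by (simp add: hmor_def)
  have pj: "p ! j \<in> snd A" "card (p ! j) \<le> k"
    using p j by (auto simp: plays_def)
  then have "finite (p ! j)"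
    using hA by (simp add: hypergraph_def)
  then have "card V \<le> card (p ! j)"
    using j V by (simp add: nth_imgplay card_image_le)
  with pj show "card V \<le> k" by simp
qed

lemma fplay_imgplay:
  assumes "hypergraph A" "hmor (Hk k A) B h" "fplay k (snd A) (p, a)"
  shows "fplay k (snd B) (imgplay k (snd A) h p, h (cls k (snd A) (p, a)))"
  using assms imgplay_in_plays[OF assms(1,2)] last_imgplay[of p k "snd A" h]
  by (auto simp: fplay_def plays_def)

lemma focus_along_imgplay:
  assumes m: "m \<noteq> []" "prefix m p" "focus_along a m p" and len: "length m \<le> length m'"
  shows "focus_along (h (cls k E (p, a))) m' (imgplay k E h p)"
  unfolding focus_along_def
proof (intro allI impI)
  fix r assume r: "prefix m' r \<and> prefix r (imgplay k E h p)"
  define t where "t = take (length r) p"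
  have "r = take (length r) (imgplay k E h p)"
    using r by (metis prefix_def append_eq_conv_conj)
  then have rt: "r = imgplay k E h t"
    by (simp add: t_def take_imgplay)
  have tp: "prefix t p"
    by (simp add: t_def take_is_prefix)
  have "length m' \<le> length t"
    using prefix_length_le[of m' r] r rt by simp
  then have mt: "prefix m t"
    using prefix_length_prefix[OF m(2) tp] len by simp
  then have tne: "t \<noteq> []"
    using m(1) by auto
  have focus_t: "focus_along a t p"
    using m(3) mt by (auto simp: focus_along_def dest: prefix_order.trans)
  then have "a \<in> last t"
    using tp by (simp add: focus_along_def)
  then have "h (cls k E (t, a)) \<in> last r"
    by (simp add: rt last_imgplay[OF tne])
  moreover have "cls k E (t, a) = cls k E (p, a)"
    using play_rel_prefix[OF tp tne focus_t] by (rule cls_eq)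
  ultimately show "h (cls k E (p, a)) \<in> last r"
    by simp
qed

lemma play_rel_imgplay:
  assumes "play_rel (p, a) (q, b)"
  shows "play_rel (imgplay k E h p, h (cls k E (p, a))) (imgplay k E h q, h (cls k E (q, b)))"
proof -
  let ?m = "longest_common_prefix p q"
    and ?m' = "longest_common_prefix (imgplay k E h p) (imgplay k E h q)"
  have rel: "b = a" "?m \<noteq> []" "focus_along a ?m p" "focus_along a ?m q"
    using assms by (auto simp: play_rel_iff)
  have same_vertex: "cls k E (q, b) = cls k E (p, a)"
    using cls_eq[OF assms] by simp
  have m: "prefix ?m p" "prefix ?m q"
    using prefix_longest_common_prefix_iff by blast+
  then have "prefix (imgplay k E h ?m) ?m'"
    using prefix_imgplay prefix_longest_common_prefix_iff by blast
  then have len: "length ?m \<le> length ?m'"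
    using prefix_length_le by fastforce
  then have "?m' \<noteq> []"
    using rel(2) by auto
  moreover have "focus_along (h (cls k E (p, a))) ?m' (imgplay k E h p)"
    using focus_along_imgplay[OF rel(2) m(1) rel(3) len] .
  moreover have "focus_along (h (cls k E (p, a))) ?m' (imgplay k E h q)"
    using focus_along_imgplay[OF rel(2) m(2) rel(4) len, where h = h and k = k and E = E]
      same_vertex rel(1) by simp
  ultimately show ?thesis
    using same_vertex by (simp add: play_rel_iff)
qed

lemma kext_cls:
  assumes "fplay k (snd A) (p, a)"
  shows "kext k A B h (cls k (snd A) (p, a))
    = cls k (snd B) (imgplay k (snd A) h p, h (cls k (snd A) (p, a)))"
proof -
  define qb where "qb = (SOME qb. qb \<in> cls k (snd A) (p, a))"
  have "qb \<in> cls k (snd A) (p, a)"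
    unfolding qb_def using cls_self[OF assms] by (rule someI)
  then have "play_rel (p, a) (fst qb, snd qb)"
    by (simp add: cls_def)
  then have "play_rel (imgplay k (snd A) h (fst qb), h (cls k (snd A) (fst qb, snd qb)))
      (imgplay k (snd A) h p, h (cls k (snd A) (p, a)))"
    by (rule play_rel_sym[OF play_rel_imgplay])
  from cls_eq[OF this] show ?thesis
    unfolding kext_def qb_def[symmetric] Let_def by simp
qed

lemma hypergraph_Hk:
  assumes "hypergraph A"
  shows "hypergraph (Hk k A)"
  unfolding hypergraph_def
proof
  fix U assume "U \<in> snd (Hk k A)"
  then obtain p where p: "p \<in> plays k (snd A)" and U: "U = (\<lambda>a. cls k (snd A) (p, a)) ` last p"
    by (auto simp: mem_edges_Hk)
  have "finite U"
    using assms last_mem_edges[OF p] U by (simp add: hypergraph_def)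
  moreover have "U \<subseteq> fst (Hk k A)"
  proof
    fix x assume "x \<in> U"
    then obtain a where "a \<in> last p" "x = cls k (snd A) (p, a)"
      using U by blast
    then show "x \<in> fst (Hk k A)"
      unfolding mem_vertices_Hk using p by (intro exI[of _ "(p, a)"]) (simp add: fplay_def)
  qed
  ultimately show "finite U \<and> U \<subseteq> fst (Hk k A)" ..
qed

lemma eps_edge_Hk:
  assumes "p \<in> plays k E"
  shows "eps ` (\<lambda>a. cls k E (p, a)) ` last p = last p"
  using assms by (force simp: image_image fplay_def eps_cls)

lemma hmor_eps:
  assumes "hypergraph A"
  shows "hmor (Hk k A) A eps"
  unfolding hmor_def
proof (intro conjI ballI subsetI)
  fix y assume "y \<in> eps ` fst (Hk k A)"
  then obtain p a where "fplay k (snd A) (p, a)" "y = eps (cls k (snd A) (p, a))"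
    by (auto simp: mem_vertices_Hk)
  then have "y \<in> last p" "last p \<in> snd A"
    by (auto simp: eps_cls fplay_def last_mem_edges)
  then show "y \<in> fst A"
    using assms by (auto simp: hypergraph_def)
next
  fix U assume "U \<in> snd (Hk k A)"
  then show "eps ` U \<in> snd A"
    by (auto simp: mem_edges_Hk eps_edge_Hk last_mem_edges)
qed

lemma hmor_kext:
  assumes hA: "hypergraph A" and h: "hmor (Hk k A) B h"
  shows "hmor (Hk k A) (Hk k B) (kext k A B h)"
  unfolding hmor_def
proof (intro conjI ballI subsetI)
  fix y assume "y \<in> kext k A B h ` fst (Hk k A)"
  then obtain p a where "fplay k (snd A) (p, a)" "y = kext k A B h (cls k (snd A) (p, a))"
    by (auto simp: mem_vertices_Hk)
  then show "y \<in> fst (Hk k B)"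
    using fplay_imgplay[OF hA h] by (auto simp: kext_cls mem_vertices_Hk)
next
  fix U assume "U \<in> snd (Hk k A)"
  then obtain p where p: "p \<in> plays k (snd A)" and U: "U = (\<lambda>a. cls k (snd A) (p, a)) ` last p"
    by (auto simp: mem_edges_Hk)
  have "p \<noteq> []"
    using p by (simp add: plays_def)
  then have "kext k A B h ` U
      = (\<lambda>c. cls k (snd B) (imgplay k (snd A) h p, c)) ` last (imgplay k (snd A) h p)"
    using p by (simp add: U image_image last_imgplay kext_cls fplay_def)
  then show "kext k A B h ` U \<in> snd (Hk k B)"
    using imgplay_in_plays[OF hA h p] by (auto simp: mem_edges_Hk)
qed

lemma kext_eq_cls_if_mem:
  assumes "x \<in> fst (Hk k A)" "pa \<in> x"
  shows "kext k A B h x = cls k (snd B) (imgplay k (snd A) h (fst pa), h (cls k (snd A) pa))"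
  using vertex_Hk_eq_cls[OF assms] kext_cls by (metis prod.collapse)

lemma eps_kext:
  assumes hA: "hypergraph A" and h: "hmor (Hk k A) B h" and x: "x \<in> fst (Hk k A)"
  shows "eps (kext k A B h x) = h x"
proof -
  obtain p a where pa: "fplay k (snd A) (p, a)" and "x = cls k (snd A) (p, a)"
    using x by (auto simp: mem_vertices_Hk)
  then show ?thesis
    using eps_cls[OF fplay_imgplay[OF hA h pa]] by (simp add: kext_cls)
qed

lemma imgplay_eps: "p \<in> plays k E \<Longrightarrow> imgplay k E eps p = p"
  by (rule nth_equalityI) (auto simp: nth_imgplay eps_cls fplay_take_Suc)

lemma kext_eps:
  assumes "x \<in> fst (Hk k A)"
  shows "kext k A A eps x = x"
  using assms by (auto simp: mem_vertices_Hk kext_cls eps_cls imgplay_eps fplay_def)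

lemma imgplay_comp_kext:
  assumes "p \<in> plays k (snd A)"
  shows "imgplay k (snd A) (g \<circ> kext k A B h) p = imgplay k (snd B) g (imgplay k (snd A) h p)"
proof (rule nth_equalityI)
  fix j assume "j < length (imgplay k (snd A) (g \<circ> kext k A B h) p)"
  then have j: "j < length p" by simp
  let ?t = "take (Suc j) p"
  have "imgplay k (snd A) (g \<circ> kext k A B h) p ! j
      = (\<lambda>b. g (cls k (snd B) (imgplay k (snd A) h ?t, h (cls k (snd A) (?t, b))))) ` (p ! j)"
    using j assms by (auto simp: nth_imgplay kext_cls fplay_take_Suc)
  also have "\<dots> = imgplay k (snd B) g (imgplay k (snd A) h p) ! j"
    using j by (simp add: nth_imgplay take_imgplay image_image)
  finally show "imgplay k (snd A) (g \<circ> kext k A B h) p ! j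
      = imgplay k (snd B) g (imgplay k (snd A) h p) ! j" .
qed simp

lemma kext_comp:
  assumes hA: "hypergraph A" and h: "hmor (Hk k A) B h" and x: "x \<in> fst (Hk k A)"
  shows "kext k A C (g \<circ> kext k A B h) x = kext k B C g (kext k A B h x)"
proof -
  obtain p a where pa: "fplay k (snd A) (p, a)" and "x = cls k (snd A) (p, a)"
    using x by (auto simp: mem_vertices_Hk)
  then show ?thesis
    using fplay_imgplay[OF hA h pa] by (simp add: kext_cls imgplay_comp_kext fplay_def)
qed

theorem theorem6p2:
  fixes k :: nat
    and A :: "'a hgraph" and B :: "'b hgraph" and C :: "'c hgraph"
  assumes "k > 0"
    and "hypergraph A" and "hypergraph B" and "hypergraph C"
  shows
    "hypergraph (Hk k A)
     \<and> hmor (Hk k A) A eps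
     \<and> (\<forall>h. hmor (Hk k A) B h \<longrightarrow>
          hmor (Hk k A) (Hk k B) (kext k A B h)
          \<and> (\<forall>x\<in>fst (Hk k A). \<forall>pa\<in>x.
                kext k A B h x = cls k (snd B) (imgplay k (snd A) h (fst pa), h (cls k (snd A) pa)))
          \<and> (\<forall>x\<in>fst (Hk k A). eps (kext k A B h x) = h x))
     \<and> (\<forall>x\<in>fst (Hk k A). kext k A A eps x = x)
     \<and> (\<forall>h g. hmor (Hk k A) B h \<longrightarrow> hmor (Hk k B) C g \<longrightarrow>
          (\<forall>x\<in>fst (Hk k A). kext k A C (g \<circ> kext k A B h) x = kext k B C g (kext k A B h x)))"
  using assms(2)
  by (intro conjI allI impI ballI)
    (simp_all add: hypergraph_Hk hmor_eps hmor_kext kext_eq_cls_if_mem eps_kext kext_eps kext_comp)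

end
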